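(* Let $\mathcal{G}$ be a simple temporal clique with vertex set $V$, let $X^-$ be the set of emitters produced by the forward construction and $X^+$ the set of collectors produced by the backward construction, and assume $X^-\cup X^+=V$. (i) If there is an emitter $u\in X^-$ with $e^-(u)=\{u,v\}$ such that $\{u,v\}$ is not the edge of smallest label among the edges $\{v,x\}$ with $x\in X^-$, then $\mathcal{G}$ has a $2$-hop dismountable vertex. (ii) If there is a collector $c\in X^+$ with $e^+(c)=\{c,y\}$ such that $\{c,y\}$ is not the edge of largest label among the edges $\{y,z\}$ with $z\in X^+$, then $\mathcal{G}$ has a $2$-hop dismountable vertex.
   Context: A simple temporal clique is a pair $\mathcal{G}=(G,\lambda)$ where $G=(V,E)$ is the complete graph on a finite vertex set $V$ and $\lambda:E\to\mathbb{N}$ assigns to each edge a single integer label such that any two distinct edges sharing an endpoint have different labels; the label of an arc $(x,y)$ is $\lambda(\{x,y\})$. A journey from $x$ to $y$ is a sequence of vertices $x=u_0,\dots,u_k=y$ ($k\ge1$) with $\lambda(\{u_{i-1},u_i\})<\lambda(\{u_i,u_{i+1}\})$ for $1\le i<k$; its length is $k$, its first edge is $\{u_0,u_1\}$ and its last edge is $\{u_{k-1},u_k\}$. For a vertex $v$, $e^-(v)$ (resp. $e^+(v)$) is the edge incident to $v$ with smallest (resp. largest) label. A vertex $x$ is $2$-hop dismountable if there exist vertices $y,z\ne x$ (possibly $y=z$) such that there is a journey of length at most $2$ from $x$ to $y$ whose last edge is $e^-(y)$, and a journey of length at most $2$ from $z$ to $x$ whose first edge is $e^+(z)$. Forward construction: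 let $E^-$ be the set of arcs $(u,v)$ with $\{u,v\}=e^-(v)$, except that if $e^-(u)=e^-(v)=\{u,v\}$ only one of $(u,v),(v,u)$ is included (arbitrarily). Initialize $E^-_T:=E^-$; for every vertex $v$ of out-degree at least $2$ in $(V,E^-)$, with out-arcs $(v,u_1),\dots,(v,u_\ell)$ where $(v,u_\ell)$ has the largest label, for each $i<\ell$: if $u_i$ has out-degree $0$ in $(V,E^-)$ replace $(v,u_i)$ by $(u_i,v)$ in $E^-_T$, otherwise remove $(v,u_i)$ from $E^-_T$. Emitters are vertices of out-degree $0$ in $(V,E^-_T)$. Backward construction: let $E^+$ be the set of arcs $(v,u)$ with $\{u,v\}=e^+(v)$, except that if $e^+(u)=e^+(v)=\{u,v\}$ only one of $(u,v),(v,u)$ is included (arbitrarily). Initialize $E^+_T:=E^+$; for every vertex $v$ of in-degree at least $2$ in $(V,E^+)$, with in-arcs $(u_1,v),\dots,(u_\ell,v)$ where $(u_\ell,v)$ has the smallest label, for each $i<\ell$: if $u_i$ has in-degree $0$ in $(V,E^+)$ replace $(u_i,v)$ by $(v,u_i)$ in $E^+_T$, otherwise remove $(u_i,v)$ from $E^+_T$. Collectors are vertices of in-degree $0$ in $(V,E^+_T)$. *)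

theory Defs
  imports Main
begin

definition edges_at :: "'a set \<Rightarrow> 'a \<Rightarrow> 'a set set" where
  "edges_at V v = {{v, w} | w. w \<in> V \<and> w \<noteq> v}"

definition simple_temporal_clique :: "'a set \<Rightarrow> ('a set \<Rightarrow> nat) \<Rightarrow> bool" where
  "simple_temporal_clique V lam \<longleftrightarrow> finite V \<and>
     (\<forall>v\<in>V. \<forall>w\<in>V. \<forall>w'\<in>V. w \<noteq> v \<and> w' \<noteq> v \<and> w \<noteq> w' \<longrightarrow> lam {v, w} \<noteq> lam {v, w'})"

definition is_emin :: "'a set \<Rightarrow> ('a set \<Rightarrow> nat) \<Rightarrow> 'a \<Rightarrow> 'a set \<Rightarrow> bool" where
  "is_emin V lam v e \<longleftrightarrow> e \<in> edges_at V v \<and> (\<forall>f\<in>edges_at V v. lam e \<le> lam f)"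

definition is_emax :: "'a set \<Rightarrow> ('a set \<Rightarrow> nat) \<Rightarrow> 'a \<Rightarrow> 'a set \<Rightarrow> bool" where
  "is_emax V lam v e \<longleftrightarrow> e \<in> edges_at V v \<and> (\<forall>f\<in>edges_at V v. lam f \<le> lam e)"

definition journey :: "'a set \<Rightarrow> ('a set \<Rightarrow> nat) \<Rightarrow> 'a list \<Rightarrow> bool" where
  "journey V lam us \<longleftrightarrow> length us \<ge> 2 \<and> set us \<subseteq> V \<and>
     (\<forall>i. Suc i < length us \<longrightarrow> us ! i \<noteq> us ! Suc i) \<and>
     (\<forall>i. Suc (Suc i) < length us \<longrightarrow>
        lam {us ! i, us ! Suc i} < lam {us ! Suc i, us ! Suc (Suc i)})"

definition two_hop_dismountable :: "'a set \<Rightarrow> ('a set \<Rightarrow> nat) \<Rightarrow> 'a \<Rightarrow> bool" where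
  "two_hop_dismountable V lam x \<longleftrightarrow> x \<in> V \<and>
     (\<exists>y z. y \<noteq> x \<and> z \<noteq> x \<and>
        (\<exists>us. journey V lam us \<and> length us \<le> 3 \<and> hd us = x \<and> last us = y \<and>
              is_emin V lam y {us ! (length us - 2), last us}) \<and>
        (\<exists>us. journey V lam us \<and> length us \<le> 3 \<and> hd us = z \<and> last us = x \<and>
              is_emax V lam z {us ! 0, us ! 1}))"

definition outdeg :: "('a \<times> 'a) set \<Rightarrow> 'a \<Rightarrow> nat" where
  "outdeg E v = card {w. (v, w) \<in> E}"

definition indeg :: "('a \<times> 'a) set \<Rightarrow> 'a \<Rightarrow> nat" where
  "indeg E v = card {w. (w, v) \<in> E}"

definition minus_base :: "'a set \<Rightarrow> ('a set \<Rightarrow> nat) \<Rightarrow> ('a \<times> 'a) set" where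
  "minus_base V lam = {(u, v). u \<in> V \<and> v \<in> V \<and> u \<noteq> v \<and> is_emin V lam v {u, v}}"

definition plus_base :: "'a set \<Rightarrow> ('a set \<Rightarrow> nat) \<Rightarrow> ('a \<times> 'a) set" where
  "plus_base V lam = {(v, u). u \<in> V \<and> v \<in> V \<and> u \<noteq> v \<and> is_emax V lam v {u, v}}"

(* E is an admissible result of keeping exactly one arc of each symmetric pair (arbitrary choice) *)
definition valid_tiebreak :: "('a \<times> 'a) set \<Rightarrow> ('a \<times> 'a) set \<Rightarrow> bool" where
  "valid_tiebreak B E \<longleftrightarrow> E \<subseteq> B \<and>
     (\<forall>u v. (u, v) \<in> B \<longrightarrow>
        (if (v, u) \<in> B then ((u, v) \<in> E \<longleftrightarrow> (v, u) \<notin> E) else (u, v) \<in> E))"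

(* Forward construction: E^-_T from E^- *)
definition minus_removed :: "('a set \<Rightarrow> nat) \<Rightarrow> ('a \<times> 'a) set \<Rightarrow> ('a \<times> 'a) set" where
  "minus_removed lam Em = {(v, u). (v, u) \<in> Em \<and> outdeg Em v \<ge> 2 \<and>
      \<not> (\<forall>w. (v, w) \<in> Em \<longrightarrow> lam {v, w} \<le> lam {v, u})}"

definition minus_T :: "('a set \<Rightarrow> nat) \<Rightarrow> ('a \<times> 'a) set \<Rightarrow> ('a \<times> 'a) set" where
  "minus_T lam Em = (Em - minus_removed lam Em) \<union>
      {(u, v). (v, u) \<in> minus_removed lam Em \<and> outdeg Em u = 0}"

definition emitters :: "'a set \<Rightarrow> ('a set \<Rightarrow> nat) \<Rightarrow> ('a \<times> 'a) set \<Rightarrow> 'a set" where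
  "emitters V lam Em = {v \<in> V. outdeg (minus_T lam Em) v = 0}"

(* Backward construction: E^+_T from E^+ *)
definition plus_removed :: "('a set \<Rightarrow> nat) \<Rightarrow> ('a \<times> 'a) set \<Rightarrow> ('a \<times> 'a) set" where
  "plus_removed lam Ep = {(u, v). (u, v) \<in> Ep \<and> indeg Ep v \<ge> 2 \<and>
      \<not> (\<forall>w. (w, v) \<in> Ep \<longrightarrow> lam {u, v} \<le> lam {w, v})}"

definition plus_T :: "('a set \<Rightarrow> nat) \<Rightarrow> ('a \<times> 'a) set \<Rightarrow> ('a \<times> 'a) set" where
  "plus_T lam Ep = (Ep - plus_removed lam Ep) \<union>
      {(v, u). (u, v) \<in> plus_removed lam Ep \<and> indeg Ep u = 0}"

definition collectors :: "'a set \<Rightarrow> ('a set \<Rightarrow> nat) \<Rightarrow> ('a \<times> 'a) set \<Rightarrow> 'a set" where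
  "collectors V lam Ep = {v \<in> V. indeg (plus_T lam Ep) v = 0}"

end

theory Submission
  imports Defs
begin

(* Every emitter x is matched with the other endpoint w of e^-(x).  The arc (w,x) lies in E^-,
   so w is not an emitter, and two emitters x1, x2 sharing w cannot both survive: the one with
   the smaller label to w is reversed by the forward construction.  Hence at most half of the
   vertices are emitters, dually at most half are collectors, and under the hypothesis
   X^- \<union> X^+ = V the two sets partition V.
   For (i), let x be an emitter with \<lambda>{v,x} < \<lambda>{u,v}.  Then x, v, u is a journey ending in
   e^-(u); as x is not a collector, an in-arc of x in E^+_T yields a journey of length at most 2
   into x starting with some e^+(z).  So x is 2-hop dismountable; (ii) is symmetric. *)

subsection \<open>Edges, extremal edges and short journeys\<close>

lemma doubleton_in_edges_at_iff: "{x, w} \<in> edges_at V x \<longleftrightarrow> w \<in> V \<and> w \<noteq> x"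
  unfolding edges_at_def by (auto simp: doubleton_eq_iff)

lemma is_emin_doubletonD: "is_emin V lam x {x, w} \<Longrightarrow> w \<in> V \<and> w \<noteq> x"
  unfolding is_emin_def by (simp add: doubleton_in_edges_at_iff)

lemma is_emax_doubletonD: "is_emax V lam x {x, w} \<Longrightarrow> w \<in> V \<and> w \<noteq> x"
  unfolding is_emax_def by (simp add: doubleton_in_edges_at_iff)

lemma simple_temporal_clique_labels_differ:
  assumes "simple_temporal_clique V lam" "v \<in> V" "w \<in> V" "w' \<in> V" "w \<noteq> v" "w' \<noteq> v" "w \<noteq> w'"
  shows "lam {v, w} \<noteq> lam {v, w'}"
  using assms unfolding simple_temporal_clique_def by blast

lemma ex_max_on_finite:
  fixes f :: "'b \<Rightarrow> 'c::linorder"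
  assumes "finite S" "S \<noteq> {}"
  shows "\<exists>m\<in>S. \<forall>t\<in>S. f t \<le> f m"
proof -
  have "Max (f ` S) \<in> f ` S" using assms by simp
  then obtain m where "m \<in> S" "f m = Max (f ` S)" by auto
  moreover have "f t \<le> Max (f ` S)" if "t \<in> S" for t using assms(1) that by simp
  ultimately show ?thesis by metis
qed

lemma ex_min_on_finite:
  fixes f :: "'b \<Rightarrow> 'c::linorder"
  assumes "finite S" "S \<noteq> {}"
  shows "\<exists>m\<in>S. \<forall>t\<in>S. f m \<le> f t"
proof -
  have "Min (f ` S) \<in> f ` S" using assms by simp
  then obtain m where "m \<in> S" "f m = Min (f ` S)" by auto
  moreover have "Min (f ` S) \<le> f t" if "t \<in> S" for t using assms(1) that by simp
  ultimately show ?thesis by metis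
qed

lemma ex_is_emin:
  assumes "finite V" "v \<in> V" "v \<noteq> x"
  shows "\<exists>w. is_emin V lam x {x, w}"
proof -
  obtain m where "m \<in> V - {x}" "\<forall>t\<in>V - {x}. lam {x, m} \<le> lam {x, t}"
    using ex_min_on_finite[of "V - {x}" "\<lambda>t. lam {x, t}"] assms by blast
  then have "is_emin V lam x {x, m}"
    unfolding is_emin_def edges_at_def by auto
  then show ?thesis ..
qed

lemma ex_is_emax:
  assumes "finite V" "v \<in> V" "v \<noteq> x"
  shows "\<exists>w. is_emax V lam x {x, w}"
proof -
  obtain m where "m \<in> V - {x}" "\<forall>t\<in>V - {x}. lam {x, t} \<le> lam {x, m}"
    using ex_max_on_finite[of "V - {x}" "\<lambda>t. lam {x, t}"] assms by blast
  then have "is_emax V lam x {x, m}"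
    unfolding is_emax_def edges_at_def by auto
  then show ?thesis ..
qed

lemma journey_two_iff: "journey V lam [a, b] \<longleftrightarrow> a \<in> V \<and> b \<in> V \<and> a \<noteq> b"
  unfolding journey_def by (auto simp: less_Suc_eq)

lemma journey_three_iff:
  "journey V lam [a, b, c] \<longleftrightarrow>
     a \<in> V \<and> b \<in> V \<and> c \<in> V \<and> a \<noteq> b \<and> b \<noteq> c \<and> lam {a, b} < lam {b, c}"
  unfolding journey_def by (auto simp: less_Suc_eq)

definition arrives_via_emin :: "'a set \<Rightarrow> ('a set \<Rightarrow> nat) \<Rightarrow> 'a \<Rightarrow> 'a \<Rightarrow> bool" where
  "arrives_via_emin V lam x y \<longleftrightarrow> (\<exists>us. journey V lam us \<and> length us \<le> 3 \<and> hd us = x \<and>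
      last us = y \<and> is_emin V lam y {us ! (length us - 2), last us})"

definition departs_via_emax :: "'a set \<Rightarrow> ('a set \<Rightarrow> nat) \<Rightarrow> 'a \<Rightarrow> 'a \<Rightarrow> bool" where
  "departs_via_emax V lam z x \<longleftrightarrow> (\<exists>us. journey V lam us \<and> length us \<le> 3 \<and> hd us = z \<and>
      last us = x \<and> is_emax V lam z {us ! 0, us ! 1})"

lemma two_hop_dismountable_iff:
  "two_hop_dismountable V lam x \<longleftrightarrow> x \<in> V \<and>
     (\<exists>y. y \<noteq> x \<and> arrives_via_emin V lam x y) \<and> (\<exists>z. z \<noteq> x \<and> departs_via_emax V lam z x)"
  unfolding two_hop_dismountable_def arrives_via_emin_def departs_via_emax_def by blast

lemma arrives_via_emin_edge:
  assumes "y \<in> V" "is_emin V lam y {x, y}"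
  shows "arrives_via_emin V lam x y"
proof -
  have "x \<in> V" "x \<noteq> y" using is_emin_doubletonD[of V lam y x] assms by (auto simp: insert_commute)
  then show ?thesis
    unfolding arrives_via_emin_def using assms
    by (intro exI[of _ "[x, y]"]) (simp add: journey_two_iff)
qed

lemma arrives_via_emin_two_hops:
  assumes "journey V lam [x, v, y]" "is_emin V lam y {v, y}"
  shows "arrives_via_emin V lam x y"
  unfolding arrives_via_emin_def using assms by (intro exI[of _ "[x, v, y]"]) simp

lemma departs_via_emax_edge:
  assumes "z \<in> V" "is_emax V lam z {z, x}"
  shows "departs_via_emax V lam z x"
  unfolding departs_via_emax_def using assms is_emax_doubletonD[OF assms(2)]
  by (intro exI[of _ "[z, x]"]) (auto simp: journey_two_iff)

lemma departs_via_emax_two_hops: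
  assumes "journey V lam [z, v, x]" "is_emax V lam z {z, v}"
  shows "departs_via_emax V lam z x"
  unfolding departs_via_emax_def using assms by (intro exI[of _ "[z, v, x]"]) simp

subsection \<open>The pruning steps of the two constructions\<close>

lemma finite_successors: "finite E \<Longrightarrow> finite {w. (v, w) \<in> E}"
  by (rule finite_subset[of _ "snd ` E"]) force+

lemma finite_predecessors: "finite E \<Longrightarrow> finite {w. (w, v) \<in> E}"
  by (rule finite_subset[of _ "fst ` E"]) force+

lemma outdeg_eq_0_iff: "finite E \<Longrightarrow> outdeg E v = 0 \<longleftrightarrow> (\<forall>w. (v, w) \<notin> E)"
  unfolding outdeg_def by (simp add: finite_successors)

lemma indeg_eq_0_iff: "finite E \<Longrightarrow> indeg E v = 0 \<longleftrightarrow> (\<forall>w. (w, v) \<notin> E)"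
  unfolding indeg_def by (simp add: finite_predecessors)

lemma finite_minus_T: "finite Em \<Longrightarrow> finite (minus_T lam Em)"
proof -
  assume "finite Em"
  moreover have "minus_T lam Em \<subseteq> Em \<union> converse Em"
    unfolding minus_T_def minus_removed_def by auto
  ultimately show ?thesis by (simp add: finite_subset)
qed

lemma finite_plus_T: "finite Ep \<Longrightarrow> finite (plus_T lam Ep)"
proof -
  assume "finite Ep"
  moreover have "plus_T lam Ep \<subseteq> Ep \<union> converse Ep"
    unfolding plus_T_def plus_removed_def by auto
  ultimately show ?thesis by (simp add: finite_subset)
qed

lemma minus_T_keeps_out_arc:
  assumes "finite Em" "(v, w) \<in> Em"
  shows "\<exists>w'. (v, w') \<in> minus_T lam Em"
proof -
  obtain m where "(v, m) \<in> Em" "\<forall>t. (v, t) \<in> Em \<longrightarrow> lam {v, t} \<le> lam {v, m}"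
    using ex_max_on_finite[OF finite_successors[OF assms(1)], of v "\<lambda>t. lam {v, t}"] assms(2)
    by auto
  then have "(v, m) \<in> minus_T lam Em"
    unfolding minus_T_def minus_removed_def by blast
  then show ?thesis ..
qed

lemma plus_T_keeps_in_arc:
  assumes "finite Ep" "(w, v) \<in> Ep"
  shows "\<exists>w'. (w', v) \<in> plus_T lam Ep"
proof -
  obtain m where "(m, v) \<in> Ep" "\<forall>t. (t, v) \<in> Ep \<longrightarrow> lam {m, v} \<le> lam {t, v}"
    using ex_min_on_finite[OF finite_predecessors[OF assms(1)], of v "\<lambda>t. lam {t, v}"] assms(2)
    by auto
  then have "(m, v) \<in> plus_T lam Ep"
    unfolding plus_T_def plus_removed_def by blast
  then show ?thesis ..
qed

lemma minus_T_reverses_arc: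
  assumes "finite Em" "(v, u) \<in> Em" "(v, u') \<in> Em" "lam {v, u} < lam {v, u'}"
    and "\<forall>w. (u, w) \<notin> Em"
  shows "(u, v) \<in> minus_T lam Em"
proof -
  have "u \<noteq> u'" using assms(4) by auto
  then have "2 = card {u, u'}" by simp
  also have "\<dots> \<le> outdeg Em v"
    unfolding outdeg_def using finite_successors[OF assms(1)] assms(2,3) by (intro card_mono) auto
  finally have "outdeg Em v \<ge> 2" .
  then have "(v, u) \<in> minus_removed lam Em"
    unfolding minus_removed_def using assms(2-4) by force
  moreover have "outdeg Em u = 0" using assms(1,5) by (simp add: outdeg_eq_0_iff)
  ultimately show ?thesis unfolding minus_T_def by blast
qed

lemma plus_T_reverses_arc:
  assumes "finite Ep" "(u, v) \<in> Ep" "(u', v) \<in> Ep" "lam {u', v} < lam {u, v}"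
    and "\<forall>w. (w, u) \<notin> Ep"
  shows "(v, u) \<in> plus_T lam Ep"
proof -
  have "u \<noteq> u'" using assms(4) by auto
  then have "2 = card {u, u'}" by simp
  also have "\<dots> \<le> indeg Ep v"
    unfolding indeg_def using finite_predecessors[OF assms(1)] assms(2,3) by (intro card_mono) auto
  finally have "indeg Ep v \<ge> 2" .
  then have "(u, v) \<in> plus_removed lam Ep"
    unfolding plus_removed_def using assms(2-4) by force
  moreover have "indeg Ep u = 0" using assms(1,5) by (simp add: indeg_eq_0_iff)
  ultimately show ?thesis unfolding plus_T_def by blast
qed

lemma minus_T_arc_cases:
  assumes "(x, y) \<in> minus_T lam Em"
  obtains "(x, y) \<in> Em"
    | w where "(y, x) \<in> Em" "(y, w) \<in> Em" "lam {y, x} < lam {y, w}"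
  using assms unfolding minus_T_def minus_removed_def by (auto simp: not_le)

lemma plus_T_arc_cases:
  assumes "(z, x) \<in> plus_T lam Ep"
  obtains "(z, x) \<in> Ep"
    | w where "(x, z) \<in> Ep" "(w, z) \<in> Ep" "lam {w, z} < lam {x, z}"
  using assms unfolding plus_T_def plus_removed_def by (auto simp: not_le)

subsection \<open>Emitters and collectors\<close>

lemma double_card_le_if_inj_into_complement:
  assumes "finite V" "X \<subseteq> V" "inj_on f X" "f ` X \<subseteq> V - X"
  shows "2 * card X \<le> card V"
proof -
  have "card X = card (f ` X)" using assms(3) by (simp add: card_image)
  also have "\<dots> \<le> card (V - X)" using assms(1,4) by (simp add: card_mono)
  also have "\<dots> = card V - card X" using assms(1,2) by (simp add: card_Diff_subset finite_subset)
  finally show ?thesis using card_mono[OF assms(1,2)] by linarith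
qed

lemma disjoint_if_card_halves_cover:
  assumes "finite V" "X \<union> C = V" "2 * card X \<le> card V" "2 * card C \<le> card V"
  shows "X \<inter> C = {}"
proof -
  have fin: "finite X" "finite C" using assms(1,2) by auto
  have "card X + card C = card V + card (X \<inter> C)"
    using card_Un_Int[OF fin] assms(2) by simp
  then have "card (X \<inter> C) = 0" using assms(3,4) by linarith
  then show ?thesis using fin by simp
qed

lemma ex_other_elem_if_two_le_card:
  assumes "2 \<le> card V"
  shows "\<exists>w\<in>V. w \<noteq> x"
proof (rule ccontr)
  assume "\<not> ?thesis"
  then have "V \<subseteq> {x}" by blast
  then have "card V \<le> 1" using card_mono[of "{x}" V] by simp
  with assms show False by simp
qed

locale forward_construction =
  fixes V :: "'a set" and lam :: "'a set \<Rightarrow> nat" and Em :: "('a \<times> 'a) set"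
  assumes clique: "simple_temporal_clique V lam"
    and tiebreak: "valid_tiebreak (minus_base V lam) Em"
begin

lemma finite_V: "finite V"
  using clique unfolding simple_temporal_clique_def by simp

lemma arcD: "(u, v) \<in> Em \<Longrightarrow> u \<in> V \<and> v \<in> V \<and> u \<noteq> v \<and> is_emin V lam v {u, v}"
  using tiebreak unfolding valid_tiebreak_def minus_base_def by auto

lemma finite_arcs: "finite Em"
proof -
  have "Em \<subseteq> V \<times> V" using arcD by auto
  then show ?thesis using finite_V by (simp add: finite_subset)
qed

lemma emitter_no_out_arc: "x \<in> emitters V lam Em \<Longrightarrow> (x, w) \<notin> Em"
  using minus_T_keeps_out_arc[OF finite_arcs]
  unfolding emitters_def by (auto simp: outdeg_eq_0_iff finite_minus_T[OF finite_arcs])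

lemma emitter_emin_arc:
  assumes "x \<in> emitters V lam Em" "is_emin V lam x {x, w}"
  shows "(w, x) \<in> Em"
proof -
  have "(w, x) \<in> minus_base V lam"
    using assms is_emin_doubletonD[OF assms(2)]
    unfolding emitters_def minus_base_def by (auto simp: insert_commute)
  moreover have "(x, w) \<notin> Em" using emitter_no_out_arc[OF assms(1)] .
  ultimately show ?thesis using tiebreak unfolding valid_tiebreak_def by metis
qed

lemma emitter_max_label_child:
  assumes "x \<in> emitters V lam Em" "(w, x) \<in> Em" "(w, u) \<in> Em"
  shows "lam {w, u} \<le> lam {w, x}"
proof (rule ccontr)
  assume "\<not> ?thesis"
  then have "(x, w) \<in> minus_T lam Em"
    using minus_T_reverses_arc[OF finite_arcs assms(2,3)] emitter_no_out_arc[OF assms(1)] by simp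
  then show False
    using assms(1) unfolding emitters_def by (simp add: outdeg_eq_0_iff finite_minus_T[OF finite_arcs])
qed

lemma emin_partner_not_emitter:
  "x \<in> emitters V lam Em \<Longrightarrow> is_emin V lam x {x, w} \<Longrightarrow> w \<notin> emitters V lam Em"
  using emitter_emin_arc emitter_no_out_arc by blast

lemma emin_partner_inj:
  assumes "x1 \<in> emitters V lam Em" "x2 \<in> emitters V lam Em"
    and "is_emin V lam x1 {x1, w}" "is_emin V lam x2 {x2, w}"
  shows "x1 = x2"
proof -
  have arcs: "(w, x1) \<in> Em" "(w, x2) \<in> Em" using emitter_emin_arc assms by blast+
  have "lam {w, x1} = lam {w, x2}"
    using emitter_max_label_child[OF assms(2) arcs(2,1)] emitter_max_label_child[OF assms(1) arcs]
    by (rule antisym)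
  show ?thesis
  proof (rule ccontr)
    assume "x1 \<noteq> x2"
    with arcD[OF arcs(1)] arcD[OF arcs(2)] have "lam {w, x1} \<noteq> lam {w, x2}"
      by (intro simple_temporal_clique_labels_differ[OF clique]) auto
    with \<open>lam {w, x1} = lam {w, x2}\<close> show False by contradiction
  qed
qed

lemma card_emitters:
  assumes "2 \<le> card V"
  shows "2 * card (emitters V lam Em) \<le> card V"
proof -
  let ?X = "emitters V lam Em"
  have "\<exists>w. is_emin V lam x {x, w}" for x
    using ex_other_elem_if_two_le_card[OF assms, of x] ex_is_emin[OF finite_V] by blast
  then obtain f where f: "\<And>x. is_emin V lam x {x, f x}" by metis
  have "inj_on f ?X"
    by (rule inj_onI) (metis f emin_partner_inj)
  moreover have "f ` ?X \<subseteq> V - ?X"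
  proof (rule image_subsetI)
    fix x assume "x \<in> ?X"
    then show "f x \<in> V - ?X" using is_emin_doubletonD[OF f] emin_partner_not_emitter[OF _ f] by blast
  qed
  moreover have "?X \<subseteq> V" unfolding emitters_def by blast
  ultimately show ?thesis using double_card_le_if_inj_into_complement[OF finite_V] by blast
qed

lemma non_emitter_arrives_via_emin:
  assumes "x \<in> V" "x \<notin> emitters V lam Em"
  shows "\<exists>y. y \<noteq> x \<and> arrives_via_emin V lam x y"
proof -
  obtain y where "(x, y) \<in> minus_T lam Em"
    using assms unfolding emitters_def by (auto simp: outdeg_eq_0_iff finite_minus_T[OF finite_arcs])
  then show ?thesis
  proof (cases rule: minus_T_arc_cases)
    case 1
    with arcD have "y \<noteq> x" "arrives_via_emin V lam x y"
      by (auto intro: arrives_via_emin_edge)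
    then show ?thesis by blast
  next
    case (2 w)
    from arcD[OF 2(1)] arcD[OF 2(2)] 2(3)
    have "journey V lam [x, y, w]" "is_emin V lam w {y, w}"
      by (auto simp: journey_three_iff insert_commute)
    then have "arrives_via_emin V lam x w" by (rule arrives_via_emin_two_hops)
    moreover have "w \<noteq> x" using 2(3) by auto
    ultimately show ?thesis by blast
  qed
qed

end

locale backward_construction =
  fixes V :: "'a set" and lam :: "'a set \<Rightarrow> nat" and Ep :: "('a \<times> 'a) set"
  assumes clique: "simple_temporal_clique V lam"
    and tiebreak: "valid_tiebreak (plus_base V lam) Ep"
begin

lemma finite_V: "finite V"
  using clique unfolding simple_temporal_clique_def by simp

lemma arcD: "(v, u) \<in> Ep \<Longrightarrow> u \<in> V \<and> v \<in> V \<and> u \<noteq> v \<and> is_emax V lam v {v, u}"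
  using tiebreak unfolding valid_tiebreak_def plus_base_def by (auto simp: insert_commute)

lemma finite_arcs: "finite Ep"
proof -
  have "Ep \<subseteq> V \<times> V" using arcD by auto
  then show ?thesis using finite_V by (simp add: finite_subset)
qed

lemma collector_no_in_arc: "x \<in> collectors V lam Ep \<Longrightarrow> (w, x) \<notin> Ep"
  using plus_T_keeps_in_arc[OF finite_arcs]
  unfolding collectors_def by (auto simp: indeg_eq_0_iff finite_plus_T[OF finite_arcs])

lemma collector_emax_arc:
  assumes "x \<in> collectors V lam Ep" "is_emax V lam x {x, w}"
  shows "(x, w) \<in> Ep"
proof -
  have "(x, w) \<in> plus_base V lam"
    using assms is_emax_doubletonD[OF assms(2)]
    unfolding collectors_def plus_base_def by (auto simp: insert_commute)
  moreover have "(w, x) \<notin> Ep" using collector_no_in_arc[OF assms(1)] .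
  ultimately show ?thesis using tiebreak unfolding valid_tiebreak_def by metis
qed

lemma collector_min_label_parent:
  assumes "x \<in> collectors V lam Ep" "(x, w) \<in> Ep" "(u, w) \<in> Ep"
  shows "lam {x, w} \<le> lam {u, w}"
proof (rule ccontr)
  assume "\<not> ?thesis"
  then have "(w, x) \<in> plus_T lam Ep"
    using plus_T_reverses_arc[OF finite_arcs assms(2,3)] collector_no_in_arc[OF assms(1)] by simp
  then show False
    using assms(1) unfolding collectors_def by (simp add: indeg_eq_0_iff finite_plus_T[OF finite_arcs])
qed

lemma emax_partner_not_collector:
  "x \<in> collectors V lam Ep \<Longrightarrow> is_emax V lam x {x, w} \<Longrightarrow> w \<notin> collectors V lam Ep"
  using collector_emax_arc collector_no_in_arc by blast

lemma emax_partner_inj: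
  assumes "x1 \<in> collectors V lam Ep" "x2 \<in> collectors V lam Ep"
    and "is_emax V lam x1 {x1, w}" "is_emax V lam x2 {x2, w}"
  shows "x1 = x2"
proof -
  have arcs: "(x1, w) \<in> Ep" "(x2, w) \<in> Ep" using collector_emax_arc assms by blast+
  have "lam {x1, w} = lam {x2, w}"
    using collector_min_label_parent[OF assms(1) arcs] collector_min_label_parent[OF assms(2) arcs(2,1)]
    by (rule antisym)
  show ?thesis
  proof (rule ccontr)
    assume "x1 \<noteq> x2"
    with arcD[OF arcs(1)] arcD[OF arcs(2)] have "lam {w, x1} \<noteq> lam {w, x2}"
      by (intro simple_temporal_clique_labels_differ[OF clique]) auto
    with \<open>lam {x1, w} = lam {x2, w}\<close> show False by (simp add: insert_commute)
  qed
qed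

lemma card_collectors:
  assumes "2 \<le> card V"
  shows "2 * card (collectors V lam Ep) \<le> card V"
proof -
  let ?C = "collectors V lam Ep"
  have "\<exists>w. is_emax V lam x {x, w}" for x
    using ex_other_elem_if_two_le_card[OF assms, of x] ex_is_emax[OF finite_V] by blast
  then obtain g where g: "\<And>x. is_emax V lam x {x, g x}" by metis
  have "inj_on g ?C"
    by (rule inj_onI) (metis g emax_partner_inj)
  moreover have "g ` ?C \<subseteq> V - ?C"
  proof (rule image_subsetI)
    fix x assume "x \<in> ?C"
    then show "g x \<in> V - ?C" using is_emax_doubletonD[OF g] emax_partner_not_collector[OF _ g] by blast
  qed
  moreover have "?C \<subseteq> V" unfolding collectors_def by blast
  ultimately show ?thesis using double_card_le_if_inj_into_complement[OF finite_V] by blast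
qed

lemma non_collector_departs_via_emax:
  assumes "x \<in> V" "x \<notin> collectors V lam Ep"
  shows "\<exists>z. z \<noteq> x \<and> departs_via_emax V lam z x"
proof -
  obtain z where "(z, x) \<in> plus_T lam Ep"
    using assms unfolding collectors_def by (auto simp: indeg_eq_0_iff finite_plus_T[OF finite_arcs])
  then show ?thesis
  proof (cases rule: plus_T_arc_cases)
    case 1
    with arcD have "z \<noteq> x" "departs_via_emax V lam z x"
      by (auto intro: departs_via_emax_edge)
    then show ?thesis by blast
  next
    case (2 w)
    from arcD[OF 2(1)] arcD[OF 2(2)] 2(3)
    have "journey V lam [w, z, x]" "is_emax V lam w {w, z}"
      by (auto simp: journey_three_iff insert_commute)
    then have "departs_via_emax V lam w x" by (rule departs_via_emax_two_hops)
    moreover have "w \<noteq> x" using 2(3) by auto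
    ultimately show ?thesis by blast
  qed
qed

end

locale emitter_collector_cover =
  forward: forward_construction V lam Em + backward: backward_construction V lam Ep
  for V :: "'a set" and lam Em Ep +
  assumes cover: "emitters V lam Em \<union> collectors V lam Ep = V"
begin

lemma emitters_Int_collectors:
  assumes "2 \<le> card V"
  shows "emitters V lam Em \<inter> collectors V lam Ep = {}"
  using disjoint_if_card_halves_cover[OF forward.finite_V cover
      forward.card_emitters[OF assms] backward.card_collectors[OF assms]] .

lemma emitter_two_hop_dismountable:
  assumes "u \<in> emitters V lam Em" "is_emin V lam u {u, v}"
    and "x \<in> emitters V lam Em" "x \<noteq> v" "lam {v, x} < lam {u, v}"
  shows "two_hop_dismountable V lam x"
proof -
  have "u \<in> V" "x \<in> V" using assms(1,3) unfolding emitters_def by simp_all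
  have "v \<in> V" "v \<noteq> u" using is_emin_doubletonD[OF assms(2)] by simp_all
  have "u \<noteq> x" using assms(5) by (metis insert_commute less_irrefl)
  have "journey V lam [x, v, u]"
    unfolding journey_three_iff using \<open>u \<in> V\<close> \<open>x \<in> V\<close> \<open>v \<in> V\<close> \<open>v \<noteq> u\<close> assms(4,5)
    by (simp add: insert_commute)
  moreover have "is_emin V lam u {v, u}" using assms(2) by (simp add: insert_commute)
  ultimately have "arrives_via_emin V lam x u" by (rule arrives_via_emin_two_hops)
  moreover have "2 \<le> card V"
    using card_mono[OF forward.finite_V, of "{u, v}"] \<open>u \<in> V\<close> \<open>v \<in> V\<close> \<open>v \<noteq> u\<close> by simp
  then have "x \<notin> collectors V lam Ep" using emitters_Int_collectors assms(3) by blast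
  then obtain z where "z \<noteq> x" "departs_via_emax V lam z x"
    using backward.non_collector_departs_via_emax[OF \<open>x \<in> V\<close>] by blast
  ultimately show ?thesis
    unfolding two_hop_dismountable_iff using \<open>x \<in> V\<close> \<open>u \<noteq> x\<close> by blast
qed

lemma collector_two_hop_dismountable:
  assumes "c \<in> collectors V lam Ep" "is_emax V lam c {c, y}"
    and "z \<in> collectors V lam Ep" "z \<noteq> y" "lam {c, y} < lam {y, z}"
  shows "two_hop_dismountable V lam z"
proof -
  have "c \<in> V" "z \<in> V" using assms(1,3) unfolding collectors_def by simp_all
  have "y \<in> V" "y \<noteq> c" using is_emax_doubletonD[OF assms(2)] by simp_all
  have "c \<noteq> z" using assms(5) by (metis insert_commute less_irrefl)
  have "journey V lam [c, y, z]"
    unfolding journey_three_iff using \<open>c \<in> V\<close> \<open>z \<in> V\<close> \<open>y \<in> V\<close> \<open>y \<noteq> c\<close> assms(4,5)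
    by simp
  then have "departs_via_emax V lam c z" using assms(2) by (rule departs_via_emax_two_hops)
  moreover have "2 \<le> card V"
    using card_mono[OF forward.finite_V, of "{c, y}"] \<open>c \<in> V\<close> \<open>y \<in> V\<close> \<open>y \<noteq> c\<close> by simp
  then have "z \<notin> emitters V lam Em" using emitters_Int_collectors assms(3) by blast
  then obtain w where "w \<noteq> z" "arrives_via_emin V lam z w"
    using forward.non_emitter_arrives_via_emin[OF \<open>z \<in> V\<close>] by blast
  ultimately show ?thesis
    unfolding two_hop_dismountable_iff using \<open>z \<in> V\<close> \<open>c \<noteq> z\<close> by blast
qed

end

theorem lemma7:
  fixes V :: "'a set" and lam :: "'a set \<Rightarrow> nat" and Em Ep :: "('a \<times> 'a) set"
  assumes stc: "simple_temporal_clique V lam"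
    and Em: "valid_tiebreak (minus_base V lam) Em"
    and Ep: "valid_tiebreak (plus_base V lam) Ep"
    and cover: "emitters V lam Em \<union> collectors V lam Ep = V"
  shows "((\<exists>u\<in>emitters V lam Em. \<exists>v. is_emin V lam u {u, v} \<and>
             \<not> (\<forall>x\<in>emitters V lam Em - {v}. lam {u, v} \<le> lam {v, x}))
           \<longrightarrow> (\<exists>x\<in>V. two_hop_dismountable V lam x))
       \<and> ((\<exists>c\<in>collectors V lam Ep. \<exists>y. is_emax V lam c {c, y} \<and>
             \<not> (\<forall>z\<in>collectors V lam Ep - {y}. lam {y, z} \<le> lam {c, y}))
           \<longrightarrow> (\<exists>x\<in>V. two_hop_dismountable V lam x))"
proof -
  interpret emitter_collector_cover V lam Em Ep
    by unfold_locales (fact stc Em Ep cover)+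
  have dismountable_in_V: "two_hop_dismountable V lam x \<Longrightarrow> \<exists>x\<in>V. two_hop_dismountable V lam x" for x
    unfolding two_hop_dismountable_def by blast
  show ?thesis
  proof (intro conjI impI)
    assume "\<exists>u\<in>emitters V lam Em. \<exists>v. is_emin V lam u {u, v} \<and>
              \<not> (\<forall>x\<in>emitters V lam Em - {v}. lam {u, v} \<le> lam {v, x})"
    then obtain u v x where "u \<in> emitters V lam Em" "is_emin V lam u {u, v}"
      and "x \<in> emitters V lam Em" "x \<noteq> v" "lam {v, x} < lam {u, v}"
      by (auto simp: not_le)
    then have "two_hop_dismountable V lam x" by (rule emitter_two_hop_dismountable)
    then show "\<exists>x\<in>V. two_hop_dismountable V lam x" by (rule dismountable_in_V)
  next
    assume "\<exists>c\<in>collectors V lam Ep. \<exists>y. is_emax V lam c {c, y} \<and>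
              \<not> (\<forall>z\<in>collectors V lam Ep - {y}. lam {y, z} \<le> lam {c, y})"
    then obtain c y z where "c \<in> collectors V lam Ep" "is_emax V lam c {c, y}"
      and "z \<in> collectors V lam Ep" "z \<noteq> y" "lam {c, y} < lam {y, z}"
      by (auto simp: not_le)
    then have "two_hop_dismountable V lam z" by (rule collector_two_hop_dismountable)
    then show "\<exists>x\<in>V. two_hop_dismountable V lam x" by (rule dismountable_in_V)
  qed
qed

end
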